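(* Consider a fixed user set ($\delta_i^t=1$ for all users and all rounds) and let the recommendation lists in every round be produced by F-FAST. Then the variance of the Top-$N$ Fairness values among all users, $$D(F_i^T) = \frac{1}{n}\sum_{u_i\in U}\Big(F_i^T - \frac{1}{n}\sum_{u_k\in U}F_k^T\Big)^2,$$ converges to $0$ as the number of recommendation rounds $T \to \infty$.
   Context: Services $S=\{s_1,\dots,s_m\}$ with capacity constraints $c_1,\dots,c_m$ (nonnegative integers: the maximum number of users to whom $s_j$ may be recommended in one round); users $U=\{u_1,\dots,u_n\}$. Each user $u_i$ has a fixed original ranked recommendation list $l_i$ (produced from a predicted rating matrix $R=(r_{i,j})$), and $l(N)_i$ denotes the sub-list of its top $N$ services. For each service $s_j$, $U_j=\{u_i : s_j \in l(N)_i\}$. In round $t$ the system outputs a list $l_i^t$ to user $u_i$; $\delta_i^t\in\{0,1\}$ indicates whether $u_i$ uses the system in round $t$. $In\_tn(s_j,list,N)$ equals $1$ if $s_j$ is in the top-$N$ sub-list of $list$ and $0$ otherwise. Overall appearance probability: $p_j^T = \dfrac{\sum_{u_i\in U_j}\sum_{t=0}^T \delta_i^t\, In\_tn(s_j,l_i^t,N)}{\sum_{u_i\in U_j}\sum_{t=0}^T \delta_i^t}$. Actual appearance probability: $p_{i,j}^T = \dfrac{\sum_{t=0}^T \delta_i^t\, In\_tn(s_j,l_i^t,N)}{\sum_{t=0}^T \delta_i^t}$. Service fairness degree: $F_{i,j}^T = \dfrac{p_{i,j}^T - p_j^T}{p_j^T}$. Top-$N$ Fairness: $F_i^T = \sum_{s_j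 \in l(N)_i} F_{i,j}^T$. F-FAST (one round $T$): start with empty lists and remaining capacities $c_j$. Repeatedly pick the user with the lowest current Top-$N$ Fairness value; go through that user's $l(N)_i$ in rank order and insert into $l_i^T$ the first service $s_j$ with remaining capacity $c_j>0$ (not yet attempted for this user), decrement $c_j$, and update that user's Top-$N$ Fairness value (accounting for the assignment); then re-sort users by their Top-$N$ Fairness and repeat. The round ends when every service in every user's $l(N)_i$ has been attempted or all capacities are exhausted; finally the remaining positions of each $l_i^T$ are filled with the services at positions larger than $N$ in $l_i$, in order. *)

theory Defs
  imports Complex_Main
begin

text \<open>Services are 0..<m, users are 0..<n. Lists output in the rounds: L t i = list output to user i in round t.
delta i t = participation indicator of user i in round t (as a real 0/1).\<close>

definition In_tn :: "nat \<Rightarrow> nat list \<Rightarrow> nat \<Rightarrow> real" where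
  "In_tn j xs N = (if j \<in> set (take N xs) then 1 else 0)"

definition Uset :: "nat \<Rightarrow> nat \<Rightarrow> (nat \<Rightarrow> nat list) \<Rightarrow> nat \<Rightarrow> nat set" where
  "Uset n N l j = {i. i < n \<and> j \<in> set (take N (l i))}"

definition overall_prob ::
  "nat \<Rightarrow> nat \<Rightarrow> (nat \<Rightarrow> nat list) \<Rightarrow> (nat \<Rightarrow> nat \<Rightarrow> real) \<Rightarrow> (nat \<Rightarrow> nat \<Rightarrow> nat list)
   \<Rightarrow> nat \<Rightarrow> nat \<Rightarrow> real" where
  "overall_prob n N l \<delta> L T j =
     (\<Sum>i\<in>Uset n N l j. \<Sum>t\<le>T. \<delta> i t * In_tn j (L t i) N) /
     (\<Sum>i\<in>Uset n N l j. \<Sum>t\<le>T. \<delta> i t)"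

definition actual_prob ::
  "nat \<Rightarrow> (nat \<Rightarrow> nat \<Rightarrow> real) \<Rightarrow> (nat \<Rightarrow> nat \<Rightarrow> nat list) \<Rightarrow> nat \<Rightarrow> nat \<Rightarrow> nat \<Rightarrow> real" where
  "actual_prob N \<delta> L T i j =
     (\<Sum>t\<le>T. \<delta> i t * In_tn j (L t i) N) / (\<Sum>t\<le>T. \<delta> i t)"

definition fairness_degree ::
  "nat \<Rightarrow> nat \<Rightarrow> (nat \<Rightarrow> nat list) \<Rightarrow> (nat \<Rightarrow> nat \<Rightarrow> real) \<Rightarrow> (nat \<Rightarrow> nat \<Rightarrow> nat list)
   \<Rightarrow> nat \<Rightarrow> nat \<Rightarrow> nat \<Rightarrow> real" where
  "fairness_degree n N l \<delta> L T i j =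
     (actual_prob N \<delta> L T i j - overall_prob n N l \<delta> L T j) / overall_prob n N l \<delta> L T j"

definition topN_fairness ::
  "nat \<Rightarrow> nat \<Rightarrow> (nat \<Rightarrow> nat list) \<Rightarrow> (nat \<Rightarrow> nat \<Rightarrow> real) \<Rightarrow> (nat \<Rightarrow> nat \<Rightarrow> nat list)
   \<Rightarrow> nat \<Rightarrow> nat \<Rightarrow> real" where
  "topN_fairness n N l \<delta> L T i = (\<Sum>j\<in>set (take N (l i)). fairness_degree n N l \<delta> L T i j)"

text \<open>The state consists of the
partially built lists A (services inserted so far in round T), the remaining
capacities cap, and the current Top-N fairness keys f of the users.\<close>

definition one_delta :: "nat \<Rightarrow> nat \<Rightarrow> real" where
  "one_delta i t = 1"

definition ffast_key ::
  "nat \<Rightarrow> nat \<Rightarrow> (nat \<Rightarrow> nat list) \<Rightarrow> (nat \<Rightarrow> nat \<Rightarrow> nat list) \<Rightarrow> nat \<Rightarrow> (nat \<Rightarrow> nat list)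
   \<Rightarrow> nat \<Rightarrow> real" where
  "ffast_key n N l L T A i =
     topN_fairness n N l one_delta (\<lambda>t. if t < T then L t else A) T i"

definition ffast_eligible ::
  "nat \<Rightarrow> nat \<Rightarrow> (nat \<Rightarrow> nat list) \<Rightarrow> (nat \<Rightarrow> nat list) \<Rightarrow> (nat \<Rightarrow> nat) \<Rightarrow> nat set" where
  "ffast_eligible n N l A cap =
     {i. i < n \<and> (\<exists>j\<in>set (take N (l i)). j \<notin> set (A i) \<and> 0 < cap j)}"

definition ffast_step ::
  "nat \<Rightarrow> nat \<Rightarrow> (nat \<Rightarrow> nat list) \<Rightarrow> (nat \<Rightarrow> nat \<Rightarrow> nat list) \<Rightarrow> nat
   \<Rightarrow> (nat \<Rightarrow> nat list) \<times> (nat \<Rightarrow> nat) \<times> (nat \<Rightarrow> real)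
   \<Rightarrow> (nat \<Rightarrow> nat list) \<times> (nat \<Rightarrow> nat) \<times> (nat \<Rightarrow> real)" where
  "ffast_step n N l L T st =
     (case st of (A, cap, f) \<Rightarrow>
       (let E = ffast_eligible n N l A cap in
        if E = {} then (A, cap, f)
        else
          (let i = (LEAST i. i \<in> E \<and> (\<forall>k\<in>E. f i \<le> f k));
               j = hd (filter (\<lambda>j. j \<notin> set (A i) \<and> 0 < cap j) (take N (l i)));
               A' = A(i := A i @ [j]);
               cap' = cap(j := cap j - 1);
               f' = f(i := ffast_key n N l L T A' i)
           in (A', cap', f'))))"

text \<open>Every effective step inserts a new service of some user's top-N list, so after
n*N steps the round has ended (further steps are the identity).\<close>
definition ffast_round ::
  "nat \<Rightarrow> nat \<Rightarrow> (nat \<Rightarrow> nat list) \<Rightarrow> (nat \<Rightarrow> nat) \<Rightarrow> (nat \<Rightarrow> nat \<Rightarrow> nat list) \<Rightarrow> nat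
   \<Rightarrow> (nat \<Rightarrow> nat list)" where
  "ffast_round n N l c L T =
     (let A0 = (\<lambda>_. []);
          st = (ffast_step n N l L T ^^ (n * N)) (A0, c, \<lambda>i. ffast_key n N l L T A0 i)
      in (\<lambda>i. fst st i @ drop N (l i)))"

fun ffast_hist ::
  "nat \<Rightarrow> nat \<Rightarrow> (nat \<Rightarrow> nat list) \<Rightarrow> (nat \<Rightarrow> nat) \<Rightarrow> nat \<Rightarrow> (nat \<Rightarrow> nat \<Rightarrow> nat list)" where
  "ffast_hist n N l c 0 = (\<lambda>t i. [])"
| "ffast_hist n N l c (Suc T) =
     (ffast_hist n N l c T)(T := ffast_round n N l c (ffast_hist n N l c T) T)"

definition ffast_lists ::
  "nat \<Rightarrow> nat \<Rightarrow> (nat \<Rightarrow> nat list) \<Rightarrow> (nat \<Rightarrow> nat) \<Rightarrow> nat \<Rightarrow> nat \<Rightarrow> nat list" where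
  "ffast_lists n N l c t = ffast_hist n N l c (Suc t) t"

definition fairness_variance :: "nat \<Rightarrow> (nat \<Rightarrow> real) \<Rightarrow> real" where
  "fairness_variance n F = (1 / real n) * (\<Sum>i<n. (F i - (1 / real n) * (\<Sum>k<n. F k))\<^sup>2)"

end

theory Submission
  imports Defs
begin

text \<open>With every user active in every round, let \<open>h\<^sub>T(i,j)\<close> be the number of the first \<open>T\<close>
rounds in which \<open>s\<^sub>j\<close> was among the top \<open>N\<close> of the list of \<open>u\<^sub>i\<close>, let \<open>k\<^sub>j = min c\<^sub>j |U\<^sub>j|\<close> and
\<open>w\<^sub>j = |U\<^sub>j| / k\<^sub>j\<close>. Since F-FAST serves \<open>s\<^sub>j\<close> to exactly \<open>k\<^sub>j\<close> users of \<open>U\<^sub>j\<close> in each round,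
\<open>(T+1) F\<^sub>i\<^sup>T\<close> is the score \<open>G\<^sub>T\<^sub>+\<^sub>1(i) = \<Sum>\<^sub>j (w\<^sub>j h\<^sub>T\<^sub>+\<^sub>1(i,j) - (T+1))\<close>, and the scores of all
users sum to zero. The F-FAST key of a user stays within a constant of its score divided
by \<open>T+1\<close>, so a set of users whose scores lie far below those of all other users is served
before everybody else, and its total score does not decrease in the next round. A
potential argument then bounds the total score of every \<open>k\<close>-set of users from below by
\<open>-E k (n - k)\<close>; hence all scores stay bounded, the fairness values are \<open>O(1/T)\<close>, and so is
their variance.\<close>

lemma fairness_variance_nonneg: "0 \<le> fairness_variance n F"
  unfolding fairness_variance_def by (intro mult_nonneg_nonneg sum_nonneg) auto

lemma fairness_variance_le:
  fixes F :: "nat \<Rightarrow> real"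
  assumes n: "0 < n" and bound: "\<forall>i<n. \<bar>F i\<bar> \<le> \<epsilon>"
  shows "fairness_variance n F \<le> 4 * \<epsilon>\<^sup>2"
proof -
  define \<mu> where "\<mu> = (1 / real n) * (\<Sum>k<n. F k)"
  have "\<bar>\<Sum>k<n. F k\<bar> \<le> (\<Sum>k<n. \<bar>F k\<bar>)" by (rule sum_abs)
  also have "\<dots> \<le> (\<Sum>k<n. \<epsilon>)" using bound by (intro sum_mono) simp
  finally have mean: "\<bar>\<mu>\<bar> \<le> \<epsilon>"
    unfolding \<mu>_def using n by (simp add: abs_mult divide_le_eq mult.commute)
  have "(F i - \<mu>)\<^sup>2 \<le> (2 * \<epsilon>)\<^sup>2" if "i < n" for i
  proof -
    have "\<bar>F i - \<mu>\<bar> \<le> 2 * \<epsilon>" using bound that mean unfolding abs_le_iff by fastforce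
    then have "\<bar>F i - \<mu>\<bar>\<^sup>2 \<le> (2 * \<epsilon>)\<^sup>2" by (intro power_mono) auto
    then show ?thesis by simp
  qed
  then have "(\<Sum>i<n. (F i - \<mu>)\<^sup>2) \<le> real n * (4 * \<epsilon>\<^sup>2)"
    using sum_mono[of "{..<n}" "\<lambda>i. (F i - \<mu>)\<^sup>2" "\<lambda>_. (2 * \<epsilon>)\<^sup>2"] by (simp add: power_mult_distrib)
  then show ?thesis
    unfolding fairness_variance_def \<mu>_def[symmetric] using n by (simp add: divide_le_eq mult.commute)
qed

lemma fairness_variance_tendsto_zero:
  fixes F :: "nat \<Rightarrow> nat \<Rightarrow> real"
  assumes n: "0 < n" and bound: "\<And>T i. i < n \<Longrightarrow> \<bar>F T i\<bar> \<le> M / (real T + 1)"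
  shows "(\<lambda>T. fairness_variance n (F T)) \<longlonglongrightarrow> 0"
proof (rule real_tendsto_sandwich)
  show "\<forall>\<^sub>F T in sequentially. 0 \<le> fairness_variance n (F T)"
    by (simp add: fairness_variance_nonneg)
  show "\<forall>\<^sub>F T in sequentially. fairness_variance n (F T) \<le> 4 * (M / (real T + 1))\<^sup>2"
    using fairness_variance_le[OF n] bound by simp
  have "(\<lambda>T. M / (real T + 1)) \<longlonglongrightarrow> 0"
    using LIMSEQ_Suc[OF lim_const_over_n[of M]] by (simp add: add.commute)
  then have "(\<lambda>T. 4 * (M / (real T + 1))\<^sup>2) \<longlonglongrightarrow> 4 * 0\<^sup>2"
    by (intro tendsto_intros)
  then show "(\<lambda>T. 4 * (M / (real T + 1))\<^sup>2) \<longlonglongrightarrow> 0" by simp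
qed simp

definition gap_separated :: "nat \<Rightarrow> real \<Rightarrow> (nat \<Rightarrow> real) \<Rightarrow> nat set \<Rightarrow> bool" where
  "gap_separated n C g S \<longleftrightarrow> S \<subseteq> {..<n} \<and> (\<forall>a\<in>S. \<forall>b<n. b \<notin> S \<longrightarrow> g a + C < g b)"

locale score_dynamics =
  fixes n :: nat and D C :: real and G :: "nat \<Rightarrow> nat \<Rightarrow> real"
  assumes drop_nonneg: "0 \<le> D" and gap_nonneg: "0 \<le> C"
    and initial_zero: "\<And>i. i < n \<Longrightarrow> G 0 i = 0"
    and sum_zero: "\<And>T. (\<Sum>i<n. G T i) = 0"
    and bounded_drop: "\<And>T i. i < n \<Longrightarrow> G T i - D \<le> G (Suc T) i"
    and separated_gain:
      "\<And>T S. gap_separated n C (G T) S \<Longrightarrow> (\<Sum>i\<in>S. G T i) \<le> (\<Sum>i\<in>S. G (Suc T) i)"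
begin

definition deficit_bound :: "nat \<Rightarrow> real" where
  "deficit_bound k = (real n * D + C) * real k * (real n - real k)"

lemma deficit_bound_nonneg: "k \<le> n \<Longrightarrow> 0 \<le> deficit_bound k"
  unfolding deficit_bound_def using drop_nonneg gap_nonneg by simp

lemma deficit_bound_concave:
  "1 \<le> k \<Longrightarrow> deficit_bound (Suc k) + deficit_bound (k - 1) = 2 * deficit_bound k - 2 * (real n * D + C)"
  unfolding deficit_bound_def by (simp add: of_nat_diff algebra_simps)

text \<open>The induction step of the potential argument when \<open>S\<close> is not separated: exchanging
\<open>a \<in> S\<close> for the nearby outsider \<open>b\<close> and using the concavity of the bound on the sets
\<open>S - {a}\<close> and \<open>insert b S\<close> leaves enough slack to absorb a drop of \<open>|S| D\<close>.\<close>

lemma subset_sum_if_not_separated: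
  fixes g :: "nat \<Rightarrow> real"
  assumes lower: "\<And>S'. S' \<subseteq> {..<n} \<Longrightarrow> - deficit_bound (card S') \<le> sum g S'"
    and S: "S \<subseteq> {..<n}" and a: "a \<in> S" and b: "b < n" "b \<notin> S" and close: "g b \<le> g a + C"
  shows "- deficit_bound (card S) + real (card S) * D \<le> sum g S"
proof -
  have fin: "finite S" using S by (rule finite_subset) simp
  have k: "1 \<le> card S" using a fin by (auto simp: Suc_le_eq card_gt_0_iff)
  have "card S \<le> n" using card_mono[OF _ S] by simp
  then have kD: "real (card S) * D \<le> real n * D" using drop_nonneg by (simp add: mult_right_mono)
  have "- deficit_bound (card S - 1) \<le> sum g (S - {a})"
    using lower[of "S - {a}"] S a fin by (auto simp: card_Diff_singleton)
  moreover have "- deficit_bound (Suc (card S)) \<le> sum g (insert b S)"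
    using lower[of "insert b S"] S b fin by simp
  moreover have "sum g S = g a + sum g (S - {a})" using a fin by (simp add: sum.remove)
  moreover have "sum g (insert b S) = g b + sum g S" using b fin by simp
  ultimately show ?thesis using deficit_bound_concave[OF k] close gap_nonneg kD by (smt (verit))
qed

lemma subset_sum_lower_bound: "S \<subseteq> {..<n} \<Longrightarrow> - deficit_bound (card S) \<le> (\<Sum>i\<in>S. G T i)"
proof (induction T arbitrary: S)
  case 0
  have "card S \<le> n" using card_mono[OF _ "0.prems"] by simp
  moreover have "(\<Sum>i\<in>S. G 0 i) = 0" using "0.prems" initial_zero by (intro sum.neutral) auto
  ultimately show ?case using deficit_bound_nonneg by simp
next
  case (Suc T)
  show ?case
  proof (cases "gap_separated n C (G T) S")
    case True
    then show ?thesis using Suc.IH[OF Suc.prems] separated_gain by (meson order_trans)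
  next
    case False
    then obtain a b where "a \<in> S" "b < n" "b \<notin> S" "G T b \<le> G T a + C"
      using Suc.prems unfolding gap_separated_def by (auto simp: not_less)
    then have "- deficit_bound (card S) + real (card S) * D \<le> (\<Sum>i\<in>S. G T i)"
      using subset_sum_if_not_separated[OF Suc.IH Suc.prems] by blast
    moreover have "(\<Sum>i\<in>S. G T i - D) \<le> (\<Sum>i\<in>S. G (Suc T) i)"
      using Suc.prems bounded_drop by (intro sum_mono) auto
    ultimately show ?thesis by (simp add: sum_subtractf)
  qed
qed

lemma score_bounded:
  assumes i: "i < n"
  shows "\<bar>G T i\<bar> \<le> (real n * D + C) * (real n - 1)"
proof -
  have "- deficit_bound 1 \<le> G T i"
    using subset_sum_lower_bound[of "{i}" T] i by simp
  moreover have "- deficit_bound (n - 1) \<le> (\<Sum>j\<in>{..<n} - {i}. G T j)"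
    using subset_sum_lower_bound[of "{..<n} - {i}" T] i by (simp add: card_Diff_singleton)
  moreover have "(\<Sum>j<n. G T j) = G T i + (\<Sum>j\<in>{..<n} - {i}. G T j)"
    using i by (intro sum.remove) auto
  moreover have "deficit_bound 1 = (real n * D + C) * (real n - 1)"
    and "deficit_bound (n - 1) = (real n * D + C) * (real n - 1)"
    using i by (simp_all add: deficit_bound_def of_nat_diff)
  ultimately show ?thesis using sum_zero[of T] unfolding abs_le_iff by linarith
qed

end

lemma relative_deviation_identity:
  fixes x p T1 u D :: real
  assumes "0 < D" "0 < u" "0 < T1" and p: "p = D / (u * T1)"
  shows "(x / T1 - p) / p * T1 = x * u * T1 / D - T1"
  using assms(1-3) unfolding p by (simp add: field_simps)

text \<open>Here \<open>p\<close> is the overall appearance probability of a service after rounds \<open>0..T\<close> when it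
is served to \<open>k\<close> of its \<open>u\<close> users in each of the first \<open>T\<close> rounds and to \<open>r \<le> k\<close> of them so far
in round \<open>T\<close>, and \<open>(x + e) / (T + 1)\<close> is the actual probability for one of these users.\<close>

lemma relative_deviation_bounds:
  fixes x e :: real and T r k u :: nat
  assumes x: "0 \<le> x" "x \<le> real T" and e: "0 \<le> e" "e \<le> 1"
    and r: "r \<le> k" and k: "1 \<le> k" "k \<le> u"
  defines "p \<equiv> (real k * real T + real r) / (real u * (real T + 1))"
  shows "real u / real k * x - real T - 1 \<le> ((x + e) / (real T + 1) - p) / p * (real T + 1)"
    and "((x + e) / (real T + 1) - p) / p * (real T + 1) \<le> real u / real k * x - real T + 3 * real u"
proof -
  define D where "D = real k * real T + real r"
  have u: "0 < real u" and k0: "0 < real k" using k by auto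
  have "real u / real k * x - real T - 1 \<le> ((x + e) / (real T + 1) - p) / p * (real T + 1)
    \<and> ((x + e) / (real T + 1) - p) / p * (real T + 1) \<le> real u / real k * x - real T + 3 * real u"
  proof (cases "D = 0")
    case True
    then have "T = 0" "p = 0" using k unfolding D_def p_def by (auto simp: add_nonneg_eq_0_iff)
    then show ?thesis using x u by simp
  next
    case False
    moreover have "0 \<le> D" unfolding D_def by simp
    ultimately have D: "0 < D" by simp
    have eq: "((x + e) / (real T + 1) - p) / p * (real T + 1) = (x + e) * real u * (real T + 1) / D - (real T + 1)"
      by (rule relative_deviation_identity) (use D u in \<open>simp_all add: p_def D_def\<close>)
    have "real u / real k * x = x * real u * (real T + 1) / (real k * (real T + 1))"
      by simp
    also have "\<dots> \<le> (x + e) * real u * (real T + 1) / D"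
      using D x e u r unfolding D_def
      by (intro frac_le) (auto intro!: mult_right_mono simp: algebra_simps)
    finally have lower: "real u / real k * x \<le> (x + e) * real u * (real T + 1) / D" .
    have upper: "(x + e) * real u * (real T + 1) / D \<le> real u / real k * x + 3 * real u"
    proof (cases "T = 0")
      case True
      then have "x = 0" "1 \<le> real r" using x D unfolding D_def by auto
      then have "(x + e) * real u * (real T + 1) / D \<le> real u"
        using True e u unfolding D_def by (simp add: divide_le_eq mult_le_cancel_left1)
      then show ?thesis using \<open>x = 0\<close> by simp
    next
      case False
      then have T: "1 \<le> real T" by simp
      have "(x + e) * real u * (real T + 1) / D \<le> (x + 1) * real u * (real T + 1) / (real k * real T)"
        using k0 T e x u unfolding D_def by (intro frac_le) (auto intro!: mult_right_mono)
      also have "\<dots> = real u / real k * ((x + 1) * (real T + 1) / real T)"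
        using k0 T by (simp add: field_simps)
      also have "\<dots> \<le> real u / real k * (x + 3)"
        using T x by (intro mult_left_mono) (simp_all add: divide_le_eq algebra_simps)
      also have "\<dots> \<le> real u / real k * x + 3 * real u"
        using k u by (simp add: distrib_left divide_le_eq)
      finally show ?thesis .
    qed
    show ?thesis using eq lower upper by simp
  qed
  then show "real u / real k * x - real T - 1 \<le> ((x + e) / (real T + 1) - p) / p * (real T + 1)"
    and "((x + e) / (real T + 1) - p) / p * (real T + 1) \<le> real u / real k * x - real T + 3 * real u"
    by auto
qed

type_synonym ffast_state = "(nat \<Rightarrow> nat list) \<times> (nat \<Rightarrow> nat) \<times> (nat \<Rightarrow> real)"

locale ffast_instance =
  fixes n m N :: nat and c :: "nat \<Rightarrow> nat" and l :: "nat \<Rightarrow> nat list"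
  assumes users_nonempty: "0 < n"
    and lists_enumerate_services: "\<forall>i<n. distinct (l i) \<and> set (l i) = {..<m}"
begin

definition topN :: "nat \<Rightarrow> nat set" where "topN i = set (take N (l i))"

abbreviation U :: "nat \<Rightarrow> nat set" where "U j \<equiv> Uset n N l j"

lemma mem_U_iff: "i \<in> U j \<longleftrightarrow> i < n \<and> j \<in> topN i"
  by (simp add: Uset_def topN_def)

lemma U_subset: "U j \<subseteq> {..<n}"
  by (auto simp: mem_U_iff)

lemma finite_U [simp]: "finite (U j)"
  using U_subset by (rule finite_subset) simp

lemma card_U_le: "card (U j) \<le> n"
  using card_mono[OF _ U_subset] by simp

lemma finite_topN [simp]: "finite (topN i)"
  by (simp add: topN_def)

lemma card_topN_le: "card (topN i) \<le> N"
  unfolding topN_def by (rule order_trans[OF card_length]) simp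

lemma topN_subset: "i < n \<Longrightarrow> topN i \<subseteq> {..<m}"
  using lists_enumerate_services set_take_subset[of N "l i"] unfolding topN_def by blast

lemma In_tn_eq: "In_tn j xs N = of_bool (j \<in> set (take N xs))"
  by (simp add: In_tn_def)

text \<open>\<open>served j\<close> users of \<open>U j\<close> receive \<open>s\<^sub>j\<close> in every F-FAST round (see \<open>card_holders_terminal\<close>).\<close>

definition served :: "nat \<Rightarrow> nat" where "served j = min (c j) (card (U j))"

definition weight :: "nat \<Rightarrow> real" where "weight j = real (card (U j)) / real (served j)"

lemma weight_ge_1: "0 < served j \<Longrightarrow> 1 \<le> weight j"
  by (simp add: weight_def served_def)

lemma weight_mult_served: "0 < served j \<Longrightarrow> weight j * real (served j) = real (card (U j))"
  by (simp add: weight_def)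

definition served_topN :: "nat \<Rightarrow> nat set" where "served_topN i = {j \<in> topN i. 0 < served j}"

lemma finite_served_topN [simp]: "finite (served_topN i)"
  by (simp add: served_topN_def)

lemma card_served_topN_le: "card (served_topN i) \<le> N"
  using card_mono[of "topN i" "served_topN i"] card_topN_le[of i] by (auto simp: served_topN_def)

subsection \<open>One round of F-FAST\<close>

definition valid_assignment :: "(nat \<Rightarrow> nat list) \<Rightarrow> (nat \<Rightarrow> nat) \<Rightarrow> bool" where
  "valid_assignment A cap \<longleftrightarrow> (\<forall>i<n. distinct (A i) \<and> set (A i) \<subseteq> topN i) \<and>
     (\<forall>j. cap j + card {i. i < n \<and> j \<in> set (A i)} = c j)"

abbreviation eligible :: "(nat \<Rightarrow> nat list) \<Rightarrow> (nat \<Rightarrow> nat) \<Rightarrow> nat set" where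
  "eligible A cap \<equiv> ffast_eligible n N l A cap"

lemma mem_eligible_iff: "i \<in> eligible A cap \<longleftrightarrow> i < n \<and> (\<exists>j\<in>topN i. j \<notin> set (A i) \<and> 0 < cap j)"
  by (simp add: ffast_eligible_def topN_def)

lemma finite_eligible [simp]: "finite (eligible A cap)"
  by (rule finite_subset[of _ "{..<n}"]) (auto simp: mem_eligible_iff)

lemma ffast_step_cases:
  obtains (idle) "eligible A cap = {}" "ffast_step n N l L T (A, cap, f) = (A, cap, f)"
  | (assign) i j where "i \<in> eligible A cap" "\<forall>x\<in>eligible A cap. f i \<le> f x"
      "j \<in> topN i" "j \<notin> set (A i)" "0 < cap j"
      "ffast_step n N l L T (A, cap, f) =
        (A(i := A i @ [j]), cap(j := cap j - 1), f(i := ffast_key n N l L T (A(i := A i @ [j])) i))"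
proof (cases "eligible A cap = {}")
  case True
  then show ?thesis using idle by (simp add: ffast_step_def)
next
  case False
  have "Min (f ` eligible A cap) \<in> f ` eligible A cap" using False by (intro Min_in) auto
  then obtain x where "x \<in> eligible A cap" "f x = Min (f ` eligible A cap)" by (metis imageE)
  then have "x \<in> eligible A cap \<and> (\<forall>k\<in>eligible A cap. f x \<le> f k)" by simp
  define i where "i = (LEAST i. i \<in> eligible A cap \<and> (\<forall>k\<in>eligible A cap. f i \<le> f k))"
  have i: "i \<in> eligible A cap \<and> (\<forall>k\<in>eligible A cap. f i \<le> f k)"
    unfolding i_def by (rule LeastI) fact
  define P where "P = (\<lambda>j. j \<notin> set (A i) \<and> 0 < cap j)"
  have "filter P (take N (l i)) \<noteq> []"
    using i by (auto simp: ffast_eligible_def P_def filter_empty_conv)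
  then have "hd (filter P (take N (l i))) \<in> set (filter P (take N (l i)))" by (rule hd_in_set)
  then have j: "hd (filter P (take N (l i))) \<in> topN i" "P (hd (filter P (take N (l i))))"
    by (auto simp: topN_def)
  show ?thesis
    by (rule assign[of i "hd (filter P (take N (l i)))"])
      (use False i j in \<open>simp_all add: P_def ffast_step_def Let_def flip: i_def\<close>)
qed

lemma valid_assignment_start: "valid_assignment (\<lambda>_. []) c"
  by (simp add: valid_assignment_def)

lemma valid_assignment_step:
  assumes valid: "valid_assignment A cap" and i: "i < n"
    and j: "j \<in> topN i" "j \<notin> set (A i)" "0 < cap j"
  shows "valid_assignment (A(i := A i @ [j])) (cap(j := cap j - 1))"
proof -
  let ?A' = "A(i := A i @ [j])"
  have "{i'. i' < n \<and> j \<in> set (?A' i')} = insert i {i'. i' < n \<and> j \<in> set (A i')}"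
    using i by auto
  moreover have "i \<notin> {i'. i' < n \<and> j \<in> set (A i')}" using j by auto
  ultimately have "card {i'. i' < n \<and> j \<in> set (?A' i')} = Suc (card {i'. i' < n \<and> j \<in> set (A i')})"
    by simp
  moreover have "{i'. i' < n \<and> j' \<in> set (?A' i')} = {i'. i' < n \<and> j' \<in> set (A i')}" if "j' \<noteq> j" for j'
    using that by auto
  moreover have "0 < c j"
    using valid j(3) unfolding valid_assignment_def by (metis add_gr_0)
  ultimately show ?thesis
    using valid j unfolding valid_assignment_def by auto
qed

definition round_start :: "(nat \<Rightarrow> nat \<Rightarrow> nat list) \<Rightarrow> nat \<Rightarrow> ffast_state" where
  "round_start L T = ((\<lambda>_. []), c, \<lambda>i. ffast_key n N l L T (\<lambda>_. []) i)"

abbreviation round_state :: "(nat \<Rightarrow> nat \<Rightarrow> nat list) \<Rightarrow> nat \<Rightarrow> nat \<Rightarrow> ffast_state" where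
  "round_state L T k \<equiv> (ffast_step n N l L T ^^ k) (round_start L T)"

lemma round_state_induct:
  assumes P_start: "P 0 (\<lambda>_. []) c (\<lambda>i. ffast_key n N l L T (\<lambda>_. []) i)"
    and P_idle: "\<And>k A cap f. valid_assignment A cap \<Longrightarrow> eligible A cap = {} \<Longrightarrow> P k A cap f
      \<Longrightarrow> P (Suc k) A cap f"
    and P_assign: "\<And>k A cap f i j. valid_assignment A cap \<Longrightarrow> P k A cap f \<Longrightarrow>
      i \<in> eligible A cap \<Longrightarrow> \<forall>x\<in>eligible A cap. f i \<le> f x \<Longrightarrow>
      j \<in> topN i \<Longrightarrow> j \<notin> set (A i) \<Longrightarrow> 0 < cap j \<Longrightarrow>
      P (Suc k) (A(i := A i @ [j])) (cap(j := cap j - 1)) (f(i := ffast_key n N l L T (A(i := A i @ [j])) i))"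
    and state: "round_state L T k = (A, cap, f)"
  shows "valid_assignment A cap \<and> P k A cap f"
  using state
proof (induction k arbitrary: A cap f)
  case 0
  then show ?case using P_start valid_assignment_start by (auto simp: round_start_def)
next
  case (Suc k)
  obtain A0 cap0 f0 where st: "round_state L T k = (A0, cap0, f0)" by (cases "round_state L T k")
  have valid: "valid_assignment A0 cap0" and P: "P k A0 cap0 f0" using Suc.IH st by auto
  have step: "ffast_step n N l L T (A0, cap0, f0) = (A, cap, f)" using Suc.prems st by simp
  show ?case
  proof (cases rule: ffast_step_cases[of A0 cap0 L T f0])
    case idle
    then show ?thesis using step valid P_idle[OF valid idle(1) P] by simp
  next
    case (assign i j)
    have "i < n" using assign(1) by (simp add: mem_eligible_iff)
    moreover have "A = A0(i := A0 i @ [j]) \<and> cap = cap0(j := cap0 j - 1)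
        \<and> f = f0(i := ffast_key n N l L T (A0(i := A0 i @ [j])) i)"
      using assign(6) step by (metis prod.inject)
    ultimately show ?thesis
      using valid_assignment_step[OF valid _ assign(3-5)] P_assign[OF valid P assign(1-5)] by blast
  qed
qed

definition assigned_count :: "(nat \<Rightarrow> nat list) \<Rightarrow> nat" where
  "assigned_count A = (\<Sum>i<n. length (A i))"

lemma length_assignment_eq_card:
  "valid_assignment A cap \<Longrightarrow> i < n \<Longrightarrow> length (A i) = card (set (A i))"
  by (simp add: valid_assignment_def distinct_card)

lemma length_assignment_le:
  assumes valid: "valid_assignment A cap" and i: "i < n"
  shows "length (A i) \<le> N"
proof -
  have "card (set (A i)) \<le> card (topN i)"
    using valid i by (intro card_mono) (auto simp: valid_assignment_def)
  then show ?thesis using length_assignment_eq_card[OF valid i] card_topN_le[of i] by linarith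
qed

lemma assigned_count_less:
  assumes valid: "valid_assignment A cap" and "eligible A cap \<noteq> {}"
  shows "assigned_count A < n * N"
proof -
  obtain i j where i: "i < n" and j: "j \<in> topN i" "j \<notin> set (A i)"
    using assms(2) by (auto simp: mem_eligible_iff)
  have "card (set (A i)) < card (topN i)"
    using valid i j by (intro psubset_card_mono) (auto simp: valid_assignment_def)
  then have "length (A i) < N" using length_assignment_eq_card[OF valid i] card_topN_le[of i] by linarith
  then have "assigned_count A < (\<Sum>x<n. N)"
    unfolding assigned_count_def using length_assignment_le[OF valid] i
    by (intro sum_strict_mono_ex1) auto
  then show ?thesis by simp
qed

lemma assigned_count_append: "i < n \<Longrightarrow> assigned_count (A(i := A i @ [j])) = Suc (assigned_count A)"
  unfolding assigned_count_def by (simp add: sum.If_cases Int_absorb1 sum.remove)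

lemma round_state_terminal:
  assumes state: "round_state L T (n * N) = (A, cap, f)"
  shows "valid_assignment A cap" "eligible A cap = {}"
proof -
  have inv: "valid_assignment A cap \<and> (eligible A cap = {} \<or> assigned_count A = n * N)"
  proof (rule round_state_induct[where P = "\<lambda>k A cap f. eligible A cap = {} \<or> assigned_count A = k", OF _ _ _ state])
    fix k A cap f i j
    assume "eligible A cap = {} \<or> assigned_count A = k" and i: "i \<in> eligible A cap"
    then have "assigned_count A = k" by auto
    moreover have "i < n" using i by (simp add: mem_eligible_iff)
    ultimately show "eligible (A(i := A i @ [j])) (cap(j := cap j - 1)) = {}
      \<or> assigned_count (A(i := A i @ [j])) = Suc k"
      by (simp add: assigned_count_append)
  qed (simp_all add: assigned_count_def)
  then show "valid_assignment A cap" by blast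
  show "eligible A cap = {}" using inv assigned_count_less by (metis less_irrefl)
qed

abbreviation hist :: "nat \<Rightarrow> nat \<Rightarrow> nat \<Rightarrow> nat list" where "hist \<equiv> ffast_hist n N l c"

definition final_assignment :: "nat \<Rightarrow> nat \<Rightarrow> nat list" where
  "final_assignment T = fst (round_state (hist T) T (n * N))"

lemma final_assignment_terminal:
  obtains cap where "valid_assignment (final_assignment T) cap" "eligible (final_assignment T) cap = {}"
proof -
  obtain A cap f where state: "round_state (hist T) T (n * N) = (A, cap, f)"
    by (cases "round_state (hist T) T (n * N)")
  then have "final_assignment T = A" by (simp add: final_assignment_def)
  then show ?thesis using that round_state_terminal[OF state] by simp
qed

lemma hist_Suc_last: "hist (Suc T) T i = final_assignment T i @ drop N (l i)"
  by (simp add: ffast_round_def round_start_def final_assignment_def Let_def)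

lemma ffast_lists_eq_hist: "t < T \<Longrightarrow> ffast_lists n N l c t = hist T t"
proof (induction T)
  case (Suc T)
  then show ?case by (cases "t = T") (simp_all add: ffast_lists_def)
qed simp

lemma In_tn_assignment:
  "valid_assignment A cap \<Longrightarrow> i < n \<Longrightarrow> In_tn j (A i) N = of_bool (j \<in> set (A i))"
  using length_assignment_le by (simp add: In_tn_eq)

lemma In_tn_assignment_tail:
  assumes valid: "valid_assignment A cap" and i: "i < n" and j: "j \<in> topN i"
  shows "In_tn j (A i @ drop N (l i)) N = of_bool (j \<in> set (A i))"
proof -
  have "j \<notin> set (drop N (l i))"
    using set_take_disj_set_drop_if_distinct[of "l i" N N] lists_enumerate_services i j
    unfolding topN_def by blast
  then have "j \<notin> set (take (N - length (A i)) (drop N (l i)))"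
    using set_take_subset by fastforce
  then show ?thesis using length_assignment_le[OF valid i] by (simp add: In_tn_eq)
qed

lemma holders_eq:
  "valid_assignment A cap \<Longrightarrow> {i. i < n \<and> j \<in> set (A i)} = {i \<in> U j. j \<in> set (A i)}"
  by (auto simp: valid_assignment_def mem_U_iff)

lemma cap_add_card_holders:
  "valid_assignment A cap \<Longrightarrow> cap j + card {i \<in> U j. j \<in> set (A i)} = c j"
  by (metis (no_types, lifting) holders_eq valid_assignment_def)

lemma card_holders_le_served:
  "valid_assignment A cap \<Longrightarrow> card {i \<in> U j. j \<in> set (A i)} \<le> served j"
  using cap_add_card_holders[of A cap j] card_mono[of "U j" "{i \<in> U j. j \<in> set (A i)}"]
  by (auto simp: served_def)

lemma card_holders_terminal:
  assumes valid: "valid_assignment A cap" and terminal: "eligible A cap = {}"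
  shows "card {i \<in> U j. j \<in> set (A i)} = served j"
proof (cases "cap j = 0")
  case True
  then show ?thesis
    using cap_add_card_holders[OF valid, of j] card_mono[of "U j" "{i \<in> U j. j \<in> set (A i)}"]
    by (auto simp: served_def)
next
  case False
  have "j \<in> set (A i)" if "i < n" "j \<in> topN i" for i
    using terminal False that mem_eligible_iff[of i A cap] by blast
  then have "{i \<in> U j. j \<in> set (A i)} = U j" by (auto simp: mem_U_iff)
  then show ?thesis using cap_add_card_holders[OF valid, of j] by (simp add: served_def)
qed

subsection \<open>Scores\<close>

definition hits :: "nat \<Rightarrow> nat \<Rightarrow> nat \<Rightarrow> real" where
  "hits T i j = (\<Sum>t<T. In_tn j (hist T t i) N)"

lemma hits_nonneg: "0 \<le> hits T i j"
  unfolding hits_def In_tn_def by (intro sum_nonneg) simp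

lemma hits_le: "hits T i j \<le> real T"
  using sum_mono[of "{..<T}" "\<lambda>t. In_tn j (hist T t i) N" "\<lambda>_. 1"] unfolding hits_def In_tn_def by simp

lemma hits_Suc_eq: "hits (Suc T) i j = hits T i j + In_tn j (hist (Suc T) T i) N"
proof -
  have "(\<Sum>t<T. In_tn j (hist (Suc T) t i) N) = hits T i j"
    unfolding hits_def by (intro sum.cong) auto
  moreover have "hits (Suc T) i j = (\<Sum>t<T. In_tn j (hist (Suc T) t i) N) + In_tn j (hist (Suc T) T i) N"
    by (simp only: hits_def sum.lessThan_Suc)
  ultimately show ?thesis by simp
qed

lemma hits_Suc:
  assumes "i < n" "j \<in> topN i"
  shows "hits (Suc T) i j = hits T i j + of_bool (j \<in> set (final_assignment T i))"
proof -
  obtain cap where "valid_assignment (final_assignment T) cap" by (rule final_assignment_terminal)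
  then show ?thesis
    using assms by (simp only: hits_Suc_eq hist_Suc_last In_tn_assignment_tail)
qed

lemma sum_hits: "(\<Sum>i\<in>U j. hits T i j) = real (served j) * real T"
proof (induction T)
  case (Suc T)
  obtain cap where valid: "valid_assignment (final_assignment T) cap"
    and terminal: "eligible (final_assignment T) cap = {}" by (rule final_assignment_terminal)
  have "(\<Sum>i\<in>U j. hits (Suc T) i j) = (\<Sum>i\<in>U j. hits T i j) + (\<Sum>i\<in>U j. of_bool (j \<in> set (final_assignment T i)))"
    by (simp add: sum.distrib hits_Suc mem_U_iff)
  also have "(\<Sum>i\<in>U j. of_bool (j \<in> set (final_assignment T i)) :: real) = real (served j)"
    using card_holders_terminal[OF valid terminal, of j] by (simp add: of_bool_def sum.If_cases Int_def)
  finally show ?case using Suc.IH by (simp add: algebra_simps)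
qed (simp add: hits_def)

definition score :: "nat \<Rightarrow> nat \<Rightarrow> real" where
  "score T i = (\<Sum>j\<in>served_topN i. weight j * hits T i j - real T)"

lemma score_zero: "score 0 i = 0"
  by (simp add: score_def hits_def)

lemma score_Suc:
  "i < n \<Longrightarrow> score (Suc T) i =
     score T i + (\<Sum>j\<in>served_topN i. weight j * of_bool (j \<in> set (final_assignment T i)) - 1)"
  unfolding score_def sum.distrib[symmetric]
  by (intro sum.cong) (auto simp: served_topN_def hits_Suc algebra_simps)

lemma score_drop:
  assumes i: "i < n"
  shows "score T i - real N \<le> score (Suc T) i"
proof -
  have "-1 \<le> weight j * of_bool (j \<in> set (final_assignment T i)) - 1" if "j \<in> served_topN i" for j
    using weight_ge_1[of j] that by (simp add: served_topN_def)
  then have "(\<Sum>j\<in>served_topN i. -1) \<le>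
      (\<Sum>j\<in>served_topN i. weight j * of_bool (j \<in> set (final_assignment T i)) - 1)"
    by (rule sum_mono)
  then have "- real (card (served_topN i)) \<le>
      (\<Sum>j\<in>served_topN i. weight j * of_bool (j \<in> set (final_assignment T i)) - 1)"
    by simp
  then show ?thesis using score_Suc[OF i, of T] card_served_topN_le[of i] by linarith
qed

lemma score_sum_zero: "(\<Sum>i<n. score T i) = 0"
proof -
  define g where "g i j = weight j * hits T i j - real T" for i j
  have "(\<Sum>i<n. score T i) = (\<Sum>i<n. \<Sum>j\<in>{j \<in> {..<m}. j \<in> served_topN i}. g i j)"
    using topN_subset unfolding score_def g_def served_topN_def
    by (intro sum.cong refl arg_cong2[where f = sum]) auto
  also have "\<dots> = (\<Sum>j<m. \<Sum>i\<in>{i \<in> {..<n}. j \<in> served_topN i}. g i j)"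
    by (rule sum.swap_restrict) auto
  also have "\<dots> = 0"
  proof -
    have "(\<Sum>i\<in>{i \<in> {..<n}. j \<in> served_topN i}. g i j) = 0" for j
    proof (cases "0 < served j")
      case True
      then have "{i \<in> {..<n}. j \<in> served_topN i} = U j" by (auto simp: served_topN_def mem_U_iff)
      then show ?thesis
        using weight_mult_served[OF True] unfolding g_def
        by (simp add: sum_subtractf sum_distrib_left[symmetric] sum_hits mult.assoc[symmetric])
    qed (simp add: served_topN_def)
    then show ?thesis by simp
  qed
  finally show ?thesis .
qed

subsection \<open>Fairness values of a partially known history\<close>

text \<open>Covers both the key of a partial assignment \<open>A\<close> (round \<open>T\<close> shows \<open>A\<close> itself) and the
lists finally output (round \<open>T\<close> shows the terminal assignment followed by the rest of \<open>l i\<close>).\<close>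

definition realizes :: "(nat \<Rightarrow> nat \<Rightarrow> nat list) \<Rightarrow> nat \<Rightarrow> (nat \<Rightarrow> nat list) \<Rightarrow> bool" where
  "realizes L T A \<longleftrightarrow> (\<forall>t<T. L t = hist T t) \<and>
     (\<forall>i<n. \<forall>j\<in>topN i. In_tn j (L T i) N = of_bool (j \<in> set (A i)))"

lemma appearances_realized:
  assumes L: "realizes L T A" and i: "i < n" and j: "j \<in> topN i"
  shows "(\<Sum>t\<le>T. one_delta i t * In_tn j (L t i) N) = hits T i j + of_bool (j \<in> set (A i))"
proof -
  have "(\<Sum>t<T. one_delta i t * In_tn j (L t i) N) = hits T i j"
    using L unfolding hits_def realizes_def by (intro sum.cong) (auto simp: one_delta_def)
  then show ?thesis using L i j
    by (simp add: lessThan_Suc_atMost[symmetric] realizes_def one_delta_def)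
qed

lemma actual_prob_realized:
  assumes "realizes L T A" "i < n" "j \<in> topN i"
  shows "actual_prob N one_delta L T i j = (hits T i j + of_bool (j \<in> set (A i))) / (real T + 1)"
proof -
  have "(\<Sum>t\<le>T. one_delta i t) = real T + 1" by (simp add: one_delta_def)
  then show ?thesis unfolding actual_prob_def appearances_realized[OF assms] by simp
qed

lemma overall_prob_realized:
  assumes L: "realizes L T A"
  shows "overall_prob n N l one_delta L T j =
    (real (served j) * real T + real (card {i \<in> U j. j \<in> set (A i)})) / (real (card (U j)) * (real T + 1))"
proof -
  have "(\<Sum>i\<in>U j. \<Sum>t\<le>T. one_delta i t * In_tn j (L t i) N) =
      (\<Sum>i\<in>U j. hits T i j + of_bool (j \<in> set (A i)))"
    using appearances_realized[OF L] by (intro sum.cong) (auto simp: mem_U_iff)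
  also have "\<dots> = real (served j) * real T + real (card {i \<in> U j. j \<in> set (A i)})"
    by (simp add: sum.distrib sum_hits of_bool_def sum.If_cases Int_def)
  finally show ?thesis by (simp add: overall_prob_def one_delta_def)
qed

lemma topN_fairness_realized:
  assumes L: "realizes L T A" and valid: "valid_assignment A cap"
  shows "topN_fairness n N l one_delta L T i = (\<Sum>j\<in>served_topN i. fairness_degree n N l one_delta L T i j)"
  unfolding topN_fairness_def topN_def[symmetric] served_topN_def
proof (rule sum.mono_neutral_right)
  show "\<forall>j\<in>topN i - {j \<in> topN i. 0 < served j}. fairness_degree n N l one_delta L T i j = 0"
  proof
    fix j assume "j \<in> topN i - {j \<in> topN i. 0 < served j}"
    then have "card {i \<in> U j. j \<in> set (A i)} = 0" using card_holders_le_served[OF valid, of j] by simp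
    then have "overall_prob n N l one_delta L T j = 0"
      using \<open>j \<in> topN i - _\<close> by (simp add: overall_prob_realized[OF L])
    then show "fairness_degree n N l one_delta L T i j = 0" by (simp add: fairness_degree_def)
  qed
qed auto

lemma fairness_degree_realized_bounds:
  assumes L: "realizes L T A" and valid: "valid_assignment A cap" and i: "i < n"
    and j: "j \<in> served_topN i"
  defines "F \<equiv> fairness_degree n N l one_delta L T i j * (real T + 1)"
  shows "weight j * hits T i j - real T - 1 \<le> F" and "F \<le> weight j * hits T i j - real T + 3 * real n"
proof -
  have jt: "j \<in> topN i" and k: "1 \<le> served j" using j by (auto simp: served_topN_def)
  note bounds = relative_deviation_bounds[where x = "hits T i j" and e = "of_bool (j \<in> set (A i))"
      and r = "card {i \<in> U j. j \<in> set (A i)}" and k = "served j" and u = "card (U j)",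
      OF hits_nonneg hits_le _ _ card_holders_le_served[OF valid] k]
  have ku: "served j \<le> card (U j)" by (simp add: served_def)
  have "real (card (U j)) \<le> real n" using card_U_le by simp
  then show "weight j * hits T i j - real T - 1 \<le> F" and "F \<le> weight j * hits T i j - real T + 3 * real n"
    using bounds[OF _ _ ku] unfolding F_def fairness_degree_def actual_prob_realized[OF L i jt]
      overall_prob_realized[OF L] weight_def by simp_all
qed

lemma topN_fairness_realized_bounds:
  assumes L: "realizes L T A" and valid: "valid_assignment A cap" and i: "i < n"
  defines "F \<equiv> topN_fairness n N l one_delta L T i * (real T + 1)"
  shows "score T i - real N \<le> F" and "F \<le> score T i + 3 * real n * real N"
proof -
  have F: "F = (\<Sum>j\<in>served_topN i. fairness_degree n N l one_delta L T i j * (real T + 1))"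
    unfolding F_def topN_fairness_realized[OF L valid] by (simp add: sum_distrib_right)
  have "score T i - real N \<le> score T i - real (card (served_topN i))"
    using card_served_topN_le[of i] by simp
  also have "\<dots> = (\<Sum>j\<in>served_topN i. weight j * hits T i j - real T - 1)"
    by (simp add: score_def sum_subtractf)
  also have "\<dots> \<le> F"
    unfolding F using fairness_degree_realized_bounds(1)[OF L valid i] by (rule sum_mono)
  finally show "score T i - real N \<le> F" .
  have "F \<le> (\<Sum>j\<in>served_topN i. weight j * hits T i j - real T + 3 * real n)"
    unfolding F using fairness_degree_realized_bounds(2)[OF L valid i] by (rule sum_mono)
  also have "\<dots> = score T i + 3 * real n * real (card (served_topN i))"
    by (simp add: score_def sum.distrib)
  also have "\<dots> \<le> score T i + 3 * real n * real N"
    using card_served_topN_le[of i] by (simp add: mult_left_mono)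
  finally show "F \<le> score T i + 3 * real n * real N" .
qed

lemma fairness_degree_terminal:
  assumes L: "realizes L T A" and valid: "valid_assignment A cap" and terminal: "eligible A cap = {}"
    and i: "i < n" and j: "j \<in> served_topN i"
  shows "fairness_degree n N l one_delta L T i j * (real T + 1) =
    weight j * (hits T i j + of_bool (j \<in> set (A i))) - (real T + 1)"
proof -
  have jt: "j \<in> topN i" and k: "0 < served j" using j by (auto simp: served_topN_def)
  then have u: "0 < card (U j)" by (simp add: served_def)
  have D: "0 < real (served j) * real T + real (served j)"
    using k by (intro add_nonneg_pos) auto
  have "fairness_degree n N l one_delta L T i j * (real T + 1) =
      (hits T i j + of_bool (j \<in> set (A i))) * real (card (U j)) * (real T + 1)
        / (real (served j) * (real T + 1)) - (real T + 1)"
    unfolding fairness_degree_def actual_prob_realized[OF L i jt] overall_prob_realized[OF L]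
      card_holders_terminal[OF valid terminal]
    by (rule relative_deviation_identity) (use D u in \<open>simp_all add: distrib_left\<close>)
  then show ?thesis by (simp add: weight_def)
qed

lemma ffast_lists_realizes: "realizes (ffast_lists n N l c) T (final_assignment T)"
proof -
  obtain cap where valid: "valid_assignment (final_assignment T) cap" by (rule final_assignment_terminal)
  have last: "ffast_lists n N l c T i = final_assignment T i @ drop N (l i)" for i
    unfolding ffast_lists_def by (rule hist_Suc_last)
  show ?thesis
    unfolding realizes_def last using ffast_lists_eq_hist In_tn_assignment_tail[OF valid] by blast
qed

lemma topN_fairness_ffast_lists:
  assumes i: "i < n"
  shows "topN_fairness n N l one_delta (ffast_lists n N l c) T i = score (Suc T) i / (real T + 1)"
proof -
  obtain cap where valid: "valid_assignment (final_assignment T) cap"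
    and terminal: "eligible (final_assignment T) cap = {}" by (rule final_assignment_terminal)
  note terminal_degree = fairness_degree_terminal[OF ffast_lists_realizes valid terminal i]
  have "topN_fairness n N l one_delta (ffast_lists n N l c) T i =
      (\<Sum>j\<in>served_topN i. (weight j * hits (Suc T) i j - real (Suc T)) / (real T + 1))"
    unfolding topN_fairness_realized[OF ffast_lists_realizes valid]
    using terminal_degree i
    by (intro sum.cong) (auto simp: hits_Suc served_topN_def eq_divide_eq)
  then show ?thesis by (simp add: score_def sum_divide_distrib)
qed

subsection \<open>Users with far lower scores are served first\<close>

definition keys_tracked :: "nat \<Rightarrow> (nat \<Rightarrow> real) \<Rightarrow> bool" where
  "keys_tracked T f \<longleftrightarrow> (\<forall>i<n. score T i - real N \<le> f i * (real T + 1)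
     \<and> f i * (real T + 1) \<le> score T i + 3 * real n * real N)"

lemma ffast_key_tracked:
  assumes valid: "valid_assignment A cap" and i: "i < n"
  shows "score T i - real N \<le> ffast_key n N l (hist T) T A i * (real T + 1)"
    and "ffast_key n N l (hist T) T A i * (real T + 1) \<le> score T i + 3 * real n * real N"
proof -
  have "realizes (\<lambda>t. if t < T then hist T t else A) T A"
    using In_tn_assignment[OF valid] by (simp add: realizes_def)
  from topN_fairness_realized_bounds[OF this valid i]
  show "score T i - real N \<le> ffast_key n N l (hist T) T A i * (real T + 1)"
    and "ffast_key n N l (hist T) T A i * (real T + 1) \<le> score T i + 3 * real n * real N"
    by (simp_all add: ffast_key_def)
qed

lemma keys_tracked_update:
  "keys_tracked T f \<Longrightarrow> valid_assignment A cap \<Longrightarrow> keys_tracked T (f(i := ffast_key n N l (hist T) T A i))"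
  using ffast_key_tracked unfolding keys_tracked_def by auto

text \<open>The gap exceeds the width of the window in which \<open>keys_tracked\<close> confines a key.\<close>

abbreviation score_gap :: real where "score_gap \<equiv> 3 * real n * real N + real N"

definition served_first :: "nat set \<Rightarrow> (nat \<Rightarrow> nat list) \<Rightarrow> bool" where
  "served_first S A \<longleftrightarrow>
     (\<forall>j b. b < n \<and> b \<notin> S \<and> j \<in> set (A b) \<longrightarrow> (\<forall>a\<in>S. j \<in> topN a \<longrightarrow> j \<in> set (A a)))"

lemma served_first_step:
  assumes sep: "gap_separated n score_gap (score T) S" and keys: "keys_tracked T f"
    and first: "served_first S A" and i: "i \<in> eligible A cap" and least: "\<forall>x\<in>eligible A cap. f i \<le> f x"
    and cap: "0 < cap j"
  shows "served_first S (A(i := A i @ [j]))"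
  unfolding served_first_def
proof (intro allI impI ballI)
  fix j' b a
  assume b: "b < n \<and> b \<notin> S \<and> j' \<in> set ((A(i := A i @ [j])) b)" and a: "a \<in> S" "j' \<in> topN a"
  show "j' \<in> set ((A(i := A i @ [j])) a)"
  proof (cases "b = i \<and> j' = j")
    case False
    then have "j' \<in> set (A b)" using b by (auto split: if_splits)
    then show ?thesis using first b a unfolding served_first_def by auto
  next
    case True
    show ?thesis
    proof (rule ccontr)
      assume "j' \<notin> set ((A(i := A i @ [j])) a)"
      then have "j \<notin> set (A a)" using True by (auto split: if_splits)
      have an: "a < n" and gap: "score T a + score_gap < score T i"
        using sep a b True by (auto simp: gap_separated_def)
      then have "a \<in> eligible A cap"
        using a True cap \<open>j \<notin> set (A a)\<close> by (auto simp: mem_eligible_iff)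
      then have "f i \<le> f a" using least by blast
      moreover have "f a * (real T + 1) \<le> score T a + 3 * real n * real N"
        using keys an by (simp add: keys_tracked_def)
      moreover have "score T i - real N \<le> f i * (real T + 1)"
        using keys b True by (simp add: keys_tracked_def)
      ultimately have "f a * (real T + 1) < f a * (real T + 1)"
        using gap mult_right_mono[of "f i" "f a" "real T + 1"] by linarith
      then show False by simp
    qed
  qed
qed

lemma separated_served_first:
  assumes sep: "gap_separated n score_gap (score T) S"
  shows "served_first S (final_assignment T)"
proof -
  obtain A cap f where state: "round_state (hist T) T (n * N) = (A, cap, f)"
    by (cases "round_state (hist T) T (n * N)")
  have "valid_assignment A cap \<and> keys_tracked T f \<and> served_first S A"
  proof (rule round_state_induct[where P = "\<lambda>k A cap f. keys_tracked T f \<and> served_first S A", OF _ _ _ state])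
    show "keys_tracked T (\<lambda>i. ffast_key n N l (hist T) T (\<lambda>_. []) i) \<and> served_first S (\<lambda>_. [])"
      using ffast_key_tracked[OF valid_assignment_start] by (simp add: keys_tracked_def served_first_def)
  next
    fix k A cap f i j
    assume valid: "valid_assignment A cap" and IH: "keys_tracked T f \<and> served_first S A"
      and i: "i \<in> eligible A cap" "\<forall>x\<in>eligible A cap. f i \<le> f x"
      and j: "j \<in> topN i" "j \<notin> set (A i)" "0 < cap j"
    have "i < n" using i by (simp add: mem_eligible_iff)
    then have "valid_assignment (A(i := A i @ [j])) (cap(j := cap j - 1))"
      using valid_assignment_step[OF valid _ j] by blast
    then show "keys_tracked T (f(i := ffast_key n N l (hist T) T (A(i := A i @ [j])) i))
      \<and> served_first S (A(i := A i @ [j]))"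
      using keys_tracked_update served_first_step[OF sep _ _ i j(3)] IH by blast
  qed simp
  then show ?thesis using state by (simp add: final_assignment_def)
qed

text \<open>Once the outsiders got \<open>s\<^sub>j\<close>, every insider that wants it has it too; otherwise \<open>s\<^sub>j\<close> ran
out of capacity and went to at least \<open>k\<^sub>j\<close> insiders, which pays for all of them since
\<open>w\<^sub>j k\<^sub>j = |U\<^sub>j|\<close>.\<close>

lemma service_gain_nonneg:
  assumes S: "S \<subseteq> {..<n}" and valid: "valid_assignment A cap" and terminal: "eligible A cap = {}"
    and first: "served_first S A"
  shows "0 \<le> (\<Sum>a\<in>{a \<in> S. j \<in> served_topN a}. weight j * of_bool (j \<in> set (A a)) - 1)"
proof (cases "0 < served j")
  case True
  define W where "W = {a \<in> S. j \<in> topN a}"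
  define H where "H = W \<inter> {a. j \<in> set (A a)}"
  have fin: "finite W" using finite_subset[OF S] unfolding W_def by simp
  have W: "{a \<in> S. j \<in> served_topN a} = W" unfolding W_def served_topN_def using True by simp
  have "(\<Sum>a\<in>W. weight j * of_bool (j \<in> set (A a)) - 1) = weight j * real (card H) - real (card W)"
    using fin by (simp add: sum_subtractf H_def)
  moreover have "real (card W) \<le> weight j * real (card H)"
  proof (cases "H = W")
    case True
    then show ?thesis using weight_ge_1[OF \<open>0 < served j\<close>] by (simp add: mult_le_cancel_right1)
  next
    case False
    then obtain a where a: "a \<in> W" "j \<notin> set (A a)" unfolding H_def by blast
    then have an: "a < n" using S unfolding W_def by blast
    have "cap j = 0"
    proof (rule ccontr)
      assume "cap j \<noteq> 0"
      then have "a \<in> eligible A cap" using a an mem_eligible_iff[of a A cap] unfolding W_def by blast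
      then show False using terminal by simp
    qed
    have "{i \<in> U j. j \<in> set (A i)} = H"
    proof (intro set_eqI iffI)
      fix x assume x: "x \<in> {i \<in> U j. j \<in> set (A i)}"
      have "x \<in> S"
      proof (rule ccontr)
        assume "x \<notin> S"
        then have "j \<in> set (A a)"
          using first x a unfolding served_first_def W_def mem_U_iff by blast
        then show False using a by simp
      qed
      then show "x \<in> H" using x unfolding H_def W_def mem_U_iff by blast
    next
      fix x assume "x \<in> H"
      then show "x \<in> {i \<in> U j. j \<in> set (A i)}" using S unfolding H_def W_def mem_U_iff by blast
    qed
    then have "served j \<le> card H"
      using cap_add_card_holders[OF valid, of j] \<open>cap j = 0\<close> by (simp add: served_def)
    then have "weight j * real (served j) \<le> weight j * real (card H)"
      using weight_ge_1[OF True] by (intro mult_left_mono) auto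
    moreover have "card W \<le> card (U j)"
      using S by (intro card_mono) (auto simp: W_def mem_U_iff)
    ultimately show ?thesis using weight_mult_served[OF True] by simp
  qed
  ultimately show ?thesis unfolding W by simp
next
  case False
  then have "{a \<in> S. j \<in> served_topN a} = {}" by (simp add: served_topN_def)
  then show ?thesis by (simp only: sum.empty order_refl)
qed

lemma separated_gain:
  assumes sep: "gap_separated n score_gap (score T) S"
  shows "(\<Sum>a\<in>S. score T a) \<le> (\<Sum>a\<in>S. score (Suc T) a)"
proof -
  obtain cap where valid: "valid_assignment (final_assignment T) cap"
    and terminal: "eligible (final_assignment T) cap = {}" by (rule final_assignment_terminal)
  have S: "S \<subseteq> {..<n}" using sep by (simp add: gap_separated_def)
  then have fin: "finite S" by (rule finite_subset) simp
  define g where "g a j = weight j * of_bool (j \<in> set (final_assignment T a)) - 1" for a j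
  have "(\<Sum>a\<in>S. score (Suc T) a) = (\<Sum>a\<in>S. score T a) + (\<Sum>a\<in>S. \<Sum>j\<in>served_topN a. g a j)"
    using S by (simp add: score_Suc g_def sum.distrib subset_eq)
  also have "(\<Sum>a\<in>S. \<Sum>j\<in>served_topN a. g a j) = (\<Sum>a\<in>S. \<Sum>j\<in>{j \<in> {..<m}. j \<in> served_topN a}. g a j)"
    using S topN_subset by (intro sum.cong refl arg_cong2[where f = sum]) (auto simp: served_topN_def)
  also have "\<dots> = (\<Sum>j<m. \<Sum>a\<in>{a \<in> S. j \<in> served_topN a}. g a j)"
    using fin by (rule sum.swap_restrict) simp
  finally have "(\<Sum>a\<in>S. score (Suc T) a) =
      (\<Sum>a\<in>S. score T a) + (\<Sum>j<m. \<Sum>a\<in>{a \<in> S. j \<in> served_topN a}. g a j)" .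
  moreover have "0 \<le> (\<Sum>j<m. \<Sum>a\<in>{a \<in> S. j \<in> served_topN a}. g a j)"
    unfolding g_def
    by (intro sum_nonneg service_gain_nonneg[OF S valid terminal separated_served_first[OF sep]])
  ultimately show ?thesis by simp
qed

sublocale score_dynamics n "real N" score_gap score
  by unfold_locales (simp_all add: score_zero score_sum_zero score_drop separated_gain)

lemma topN_fairness_ffast_lists_bound:
  "i < n \<Longrightarrow> \<bar>topN_fairness n N l one_delta (ffast_lists n N l c) T i\<bar>
    \<le> (real n * real N + score_gap) * (real n - 1) / (real T + 1)"
  using score_bounded[of i "Suc T"] by (simp add: topN_fairness_ffast_lists divide_right_mono)

end

theorem theorem2:
  fixes n m N :: nat and c :: "nat \<Rightarrow> nat" and l :: "nat \<Rightarrow> nat list"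
  assumes "0 < n"
    and "\<forall>i<n. distinct (l i) \<and> set (l i) = {..<m}"
  shows "(\<lambda>T. fairness_variance n
            (\<lambda>i. topN_fairness n N l one_delta (ffast_lists n N l c) T i))
         \<longlonglongrightarrow> 0"
proof -
  interpret ffast_instance n m N c l using assms by unfold_locales
  show ?thesis
    by (rule fairness_variance_tendsto_zero[OF assms(1) topN_fairness_ffast_lists_bound])
qed

end
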